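(* Let $S=\langle P,\varphi\rangle$ be a SUT model, $t$ a strength, $N\ge1$ an integer and $lb$ an integer with $0\le lb<CAN(t,S)$. If $N\ge CAN(t,S)$, then the optimal cost of the Partial MaxSAT instance $PMSat_{CX}^{N,t,S,lb}$ (defined in the context) is $CAN(t,S)-(lb+1)$; otherwise (i.e. if $N<CAN(t,S)$) it is $\infty$.
   Context: A SUT model is $S=\langle P,\varphi\rangle$, where $P$ is a finite set of parameters, each $p\in P$ having a finite nonempty domain $d(p)$, and $\varphi$ is a propositional formula whose atoms have the form $(p=v)$ with $p\in P$, $v\in d(p)$. A test case is a full assignment $A$ giving each $p$ a value in $d(p)$ such that $\varphi$ is true when each atom $(p=v)$ is read as true iff $A(p)=v$; it is assumed that at least one test case exists. Fix a strength $t$ with $1\le t\le|P|$. A $t$-tuple is an assignment of values to exactly $t$ distinct parameters, viewed as a set of pairs $(p,v)$; a test case covers $\tau$ if it assigns $v$ to $p$ for every $(p,v)\in\tau$. A $t$-tuple is allowed if some test case covers it; $\mathcal T_a$ is the set of allowed $t$-tuples. A covering array $CA(N;t,S)$ is a list of $N$ test cases (repetitions allowed) covering every allowed $t$-tuple; $CAN(t,S)$ is the minimum $N$ for which a $CA(N;t,S)$ exists. $[N]=\{1,\dots,N\}$. A (weighted) Partial MaxSAT instance consists of hard constraints and soft clauses $(c,w)$ with positive integer weight $w$; its optimal cost is the minimum, over truth assignments satisfying all hard constraints, of the total weight of falsified soft clauses, and $\infty$ if the hard constraints are unsatisfiable. Variables: $x_{i,p,v}$ ($i\in[N]$, $p\in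 P$, $v\in d(p)$), $c^i_\tau$ ($i\in[N]$, $\tau\in\mathcal T_a$), $u_i$ ($i\in\{lb+2,\dots,N\}$). Hard constraints of $PMSat_{CX}^{N,t,S,lb}$: (X) for every $i\in[N]$, $p\in P$: exactly one of $\{x_{i,p,v}:v\in d(p)\}$ is true; (SUTX) for every $i\in[N]$: the formula obtained from $\varphi$ by replacing each atom $(p=v)$ with $x_{i,p,v}$; (CX) for every $i\in[N]$, $\tau\in\mathcal T_a$, $(p,v)\in\tau$: $c^i_\tau\rightarrow x_{i,p,v}$; (C) for every $\tau\in\mathcal T_a$: $\bigvee_{i\in[N]}c^i_\tau$; (BSU) for every $i\in\{lb+2,\dots,N-1\}$: $u_{i+1}\rightarrow u_i$; (CU) for every $i\in\{lb+2,\dots,N\}$, $\tau\in\mathcal T_a$: $c^i_\tau\rightarrow u_i$. Soft clauses: $(\neg u_i,1)$ for every $i\in\{lb+2,\dots,N\}$. *)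

theory Defs
  imports Main "HOL-Library.Extended_Nat"
begin

datatype 'a form =
    TT | FF | Atom 'a | Neg "'a form" | Conj "'a form" "'a form"
  | Disj "'a form" "'a form" | Imp "'a form" "'a form"

fun eval :: "('a \<Rightarrow> bool) \<Rightarrow> 'a form \<Rightarrow> bool" where
  "eval \<sigma> TT = True"
| "eval \<sigma> FF = False"
| "eval \<sigma> (Atom a) = \<sigma> a"
| "eval \<sigma> (Neg f) = (\<not> eval \<sigma> f)"
| "eval \<sigma> (Conj f g) = (eval \<sigma> f \<and> eval \<sigma> g)"
| "eval \<sigma> (Disj f g) = (eval \<sigma> f \<or> eval \<sigma> g)"
| "eval \<sigma> (Imp f g) = (eval \<sigma> f \<longrightarrow> eval \<sigma> g)"

fun atoms :: "'a form \<Rightarrow> 'a set" where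
  "atoms TT = {}"
| "atoms FF = {}"
| "atoms (Atom a) = {a}"
| "atoms (Neg f) = atoms f"
| "atoms (Conj f g) = atoms f \<union> atoms g"
| "atoms (Disj f g) = atoms f \<union> atoms g"
| "atoms (Imp f g) = atoms f \<union> atoms g"

definition test_case :: "'p set \<Rightarrow> ('p \<Rightarrow> 'v set) \<Rightarrow> ('p \<times> 'v) form \<Rightarrow> ('p \<Rightarrow> 'v) \<Rightarrow> bool" where
  "test_case P d \<phi> A \<longleftrightarrow> (\<forall>p\<in>P. A p \<in> d p) \<and> eval (\<lambda>(p, v). A p = v) \<phi>"

definition sut_model :: "'p set \<Rightarrow> ('p \<Rightarrow> 'v set) \<Rightarrow> ('p \<times> 'v) form \<Rightarrow> bool" where
  "sut_model P d \<phi> \<longleftrightarrow> finite P \<and> (\<forall>p\<in>P. finite (d p) \<and> d p \<noteq> {})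
     \<and> atoms \<phi> \<subseteq> Sigma P d \<and> (\<exists>A. test_case P d \<phi> A)"

text \<open>A t-tuple: an assignment of values (from the domains) to exactly t distinct
  parameters, viewed as a set of pairs.\<close>
definition t_tuples :: "'p set \<Rightarrow> ('p \<Rightarrow> 'v set) \<Rightarrow> nat \<Rightarrow> ('p \<times> 'v) set set" where
  "t_tuples P d t = {\<tau>. \<tau> \<subseteq> Sigma P d \<and> finite \<tau> \<and> card \<tau> = t \<and> inj_on fst \<tau>}"

definition covers :: "('p \<Rightarrow> 'v) \<Rightarrow> ('p \<times> 'v) set \<Rightarrow> bool" where
  "covers A \<tau> \<longleftrightarrow> (\<forall>(p, v)\<in>\<tau>. A p = v)"

definition allowed_tuples :: "'p set \<Rightarrow> ('p \<Rightarrow> 'v set) \<Rightarrow> ('p \<times> 'v) form \<Rightarrow> nat \<Rightarrow> ('p \<times> 'v) set set" where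
  "allowed_tuples P d \<phi> t = {\<tau> \<in> t_tuples P d t. \<exists>A. test_case P d \<phi> A \<and> covers A \<tau>}"

definition is_CA :: "'p set \<Rightarrow> ('p \<Rightarrow> 'v set) \<Rightarrow> ('p \<times> 'v) form \<Rightarrow> nat \<Rightarrow> nat \<Rightarrow> ('p \<Rightarrow> 'v) list \<Rightarrow> bool" where
  "is_CA P d \<phi> t N L \<longleftrightarrow> length L = N \<and> (\<forall>A\<in>set L. test_case P d \<phi> A)
     \<and> (\<forall>\<tau>\<in>allowed_tuples P d \<phi> t. \<exists>A\<in>set L. covers A \<tau>)"

definition CAN :: "'p set \<Rightarrow> ('p \<Rightarrow> 'v set) \<Rightarrow> ('p \<times> 'v) form \<Rightarrow> nat \<Rightarrow> nat" where
  "CAN P d \<phi> t = (LEAST N. \<exists>L. is_CA P d \<phi> t N L)"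

text \<open>Hard constraints are given semantically (as predicates on truth assignments);
  soft clauses as formulas with positive weights. The optimal cost is the infimum
  (in enat) of the cost over all assignments satisfying every hard constraint;
  the infimum of the empty set is infinity.\<close>

definition soft_cost :: "('x \<Rightarrow> bool) \<Rightarrow> ('x form \<times> nat) list \<Rightarrow> nat" where
  "soft_cost \<sigma> S = (\<Sum>(c, w)\<leftarrow>S. if eval \<sigma> c then 0 else w)"

definition opt_cost :: "(('x \<Rightarrow> bool) \<Rightarrow> bool) set \<Rightarrow> ('x form \<times> nat) list \<Rightarrow> enat" where
  "opt_cost H S = (INF \<sigma> \<in> {\<sigma>. \<forall>h\<in>H. h \<sigma>}. enat (soft_cost \<sigma> S))"

datatype ('p, 'v) var = X nat 'p 'v | C nat "('p \<times> 'v) set" | U nat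

definition hard_CX :: "'p set \<Rightarrow> ('p \<Rightarrow> 'v set) \<Rightarrow> ('p \<times> 'v) form \<Rightarrow> nat \<Rightarrow> nat \<Rightarrow> nat
    \<Rightarrow> ((('p, 'v) var \<Rightarrow> bool) \<Rightarrow> bool) set" where
  "hard_CX P d \<phi> t N lb =
     \<comment> \<open>(X)\<close>
     {(\<lambda>\<sigma>. \<exists>!v. v \<in> d p \<and> \<sigma> (X i p v)) | i p. i \<in> {1..N} \<and> p \<in> P}
   \<union> \<comment> \<open>(SUTX)\<close>
     {(\<lambda>\<sigma>. eval \<sigma> (map_form (\<lambda>(p, v). X i p v) \<phi>)) | i. i \<in> {1..N}}
   \<union> \<comment> \<open>(CX)\<close>
     {(\<lambda>\<sigma>. \<sigma> (C i \<tau>) \<longrightarrow> \<sigma> (X i p v)) | i \<tau> p v.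
        i \<in> {1..N} \<and> \<tau> \<in> allowed_tuples P d \<phi> t \<and> (p, v) \<in> \<tau>}
   \<union> \<comment> \<open>(C)\<close>
     {(\<lambda>\<sigma>. \<exists>i\<in>{1..N}. \<sigma> (C i \<tau>)) | \<tau>. \<tau> \<in> allowed_tuples P d \<phi> t}
   \<union> \<comment> \<open>(BSU)\<close>
     {(\<lambda>\<sigma>. \<sigma> (U (i + 1)) \<longrightarrow> \<sigma> (U i)) | i. lb + 2 \<le> i \<and> i + 1 \<le> N}
   \<union> \<comment> \<open>(CU)\<close>
     {(\<lambda>\<sigma>. \<sigma> (C i \<tau>) \<longrightarrow> \<sigma> (U i)) | i \<tau>.
        i \<in> {lb + 2..N} \<and> \<tau> \<in> allowed_tuples P d \<phi> t}"

definition soft_CX :: "nat \<Rightarrow> nat \<Rightarrow> (('p, 'v) var form \<times> nat) list" where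
  "soft_CX N lb = map (\<lambda>i. (Neg (Atom (U i)), 1)) [lb + 2..<N + 1]"

end

(*
  A model of the hard clauses yields a covering array: row i is the test case read off the
  X-variables, and by (C) and (CX) every allowed tuple is covered by a row i with C i tau set.
  By (CU) such a row either lies among the first lb + 1 rows or has U i set, so
  CAN <= lb + 1 + (number of true U i), and of course CAN <= N.  Conversely, writing a
  minimum covering array into rows 1..CAN and setting U i exactly for i <= CAN satisfies
  all hard clauses with cost CAN - (lb + 1).
*)

theory Submission
  imports Defs
begin

lemma eval_map_form: "eval \<sigma> (map_form f \<phi>) = eval (\<sigma> \<circ> f) \<phi>"
  by (induction \<phi>) auto

lemma eval_cong: "(\<And>a. a \<in> atoms \<phi> \<Longrightarrow> \<sigma> a = \<sigma>' a) \<Longrightarrow> eval \<sigma> \<phi> = eval \<sigma>' \<phi>"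
  by (induction \<phi>) auto

lemma opt_cost_eq_enatI:
  assumes "\<forall>h\<in>H. h \<sigma>" and "soft_cost \<sigma> S = c"
    and "\<And>\<sigma>'. \<forall>h\<in>H. h \<sigma>' \<Longrightarrow> c \<le> soft_cost \<sigma>' S"
  shows "opt_cost H S = enat c"
  unfolding opt_cost_def
proof (rule antisym)
  show "(INF \<sigma>\<in>{\<sigma>. \<forall>h\<in>H. h \<sigma>}. enat (soft_cost \<sigma> S)) \<le> enat c"
    using assms(1,2) by (intro INF_lower2[of \<sigma>]) auto
  show "enat c \<le> (INF \<sigma>\<in>{\<sigma>. \<forall>h\<in>H. h \<sigma>}. enat (soft_cost \<sigma> S))"
    using assms(3) by (intro INF_greatest) simp
qed

lemma opt_cost_unsatisfiable:
  assumes "\<And>\<sigma>. \<not> (\<forall>h\<in>H. h \<sigma>)"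
  shows "opt_cost H S = \<infinity>"
proof -
  have no_model: "{\<sigma>. \<forall>h\<in>H. h \<sigma>} = {}"
    using assms by blast
  show ?thesis
    unfolding opt_cost_def no_model by (simp add: top_enat_def)
qed

lemma finite_allowed_tuples:
  assumes "sut_model P d \<phi>"
  shows "finite (allowed_tuples P d \<phi> t)"
proof (rule finite_subset)
  show "allowed_tuples P d \<phi> t \<subseteq> Pow (Sigma P d)"
    unfolding allowed_tuples_def t_tuples_def by blast
  show "finite (Pow (Sigma P d))"
    using assms unfolding sut_model_def by auto
qed

lemma CAN_le: "is_CA P d \<phi> t K L \<Longrightarrow> CAN P d \<phi> t \<le> K"
  unfolding CAN_def by (rule Least_le) blast

lemma is_CA_CAN:
  assumes "sut_model P d \<phi>"
  shows "\<exists>L. is_CA P d \<phi> t (CAN P d \<phi> t) L"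
proof -
  obtain taus where taus: "set taus = allowed_tuples P d \<phi> t"
    using finite_allowed_tuples[OF assms] finite_list by blast
  define witness where "witness \<tau> = (SOME A. test_case P d \<phi> A \<and> covers A \<tau>)" for \<tau>
  have "test_case P d \<phi> (witness \<tau>) \<and> covers (witness \<tau>) \<tau>"
    if "\<tau> \<in> allowed_tuples P d \<phi> t" for \<tau>
  proof -
    have "\<exists>A. test_case P d \<phi> A \<and> covers A \<tau>"
      using that unfolding allowed_tuples_def by blast
    then show ?thesis
      unfolding witness_def by (rule someI_ex)
  qed
  then have "is_CA P d \<phi> t (length taus) (map witness taus)"
    unfolding is_CA_def using taus by auto
  then have "\<exists>L. is_CA P d \<phi> t (length taus) L" ..
  then show ?thesis
    unfolding CAN_def by (rule LeastI)
qed

lemma hard_CX_satisfied_iff: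
  "(\<forall>h\<in>hard_CX P d \<phi> t N lb. h \<sigma>) \<longleftrightarrow>
   (\<forall>i\<in>{1..N}. \<forall>p\<in>P. \<exists>!v. v \<in> d p \<and> \<sigma> (X i p v)) \<and>
   (\<forall>i\<in>{1..N}. eval \<sigma> (map_form (\<lambda>(p, v). X i p v) \<phi>)) \<and>
   (\<forall>i\<in>{1..N}. \<forall>\<tau>\<in>allowed_tuples P d \<phi> t. \<forall>(p, v)\<in>\<tau>. \<sigma> (C i \<tau>) \<longrightarrow> \<sigma> (X i p v)) \<and>
   (\<forall>\<tau>\<in>allowed_tuples P d \<phi> t. \<exists>i\<in>{1..N}. \<sigma> (C i \<tau>)) \<and>
   (\<forall>i. lb + 2 \<le> i \<and> i + 1 \<le> N \<longrightarrow> \<sigma> (U (i + 1)) \<longrightarrow> \<sigma> (U i)) \<and>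
   (\<forall>i\<in>{lb + 2..N}. \<forall>\<tau>\<in>allowed_tuples P d \<phi> t. \<sigma> (C i \<tau>) \<longrightarrow> \<sigma> (U i))"
  unfolding hard_CX_def ball_Un
  by (simp add: imp_ex) (simp add: Ball_def Bex_def imp_ex imp_conjL)

lemma soft_cost_soft_CX: "soft_cost \<sigma> (soft_CX N lb) = card {i \<in> {lb + 2..N}. \<sigma> (U i)}"
proof -
  have "soft_cost \<sigma> (soft_CX N lb) = (\<Sum>i\<leftarrow>[lb + 2..<N + 1]. if \<sigma> (U i) then 1 else 0)"
    unfolding soft_cost_def soft_CX_def map_map
    by (intro arg_cong[where f = sum_list] map_cong) auto
  also have "\<dots> = (\<Sum>i\<in>{lb + 2..<N + 1}. if \<sigma> (U i) then 1 else 0)"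
    by (simp only: sum_list_distinct_conv_sum_set distinct_upt set_upt)
  also have "\<dots> = card {i \<in> {lb + 2..N}. \<sigma> (U i)}"
    by (simp add: sum.If_cases Int_def conj_commute atLeastLessThanSuc_atLeastAtMost)
  finally show ?thesis .
qed

definition decode_row :: "('p \<Rightarrow> 'v set) \<Rightarrow> (('p, 'v) var \<Rightarrow> bool) \<Rightarrow> nat \<Rightarrow> 'p \<Rightarrow> 'v" where
  "decode_row d \<sigma> i p = (THE v. v \<in> d p \<and> \<sigma> (X i p v))"

lemma decode_row_in_domain:
  assumes "\<exists>!v. v \<in> d p \<and> \<sigma> (X i p v)"
  shows "decode_row d \<sigma> i p \<in> d p"
  using theI'[OF assms] unfolding decode_row_def by blast

lemma decode_row_eq_iff:
  assumes "\<exists>!v. v \<in> d p \<and> \<sigma> (X i p v)" and "v \<in> d p"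
  shows "decode_row d \<sigma> i p = v \<longleftrightarrow> \<sigma> (X i p v)"
  using theI'[OF assms(1)] the1_equality[OF assms(1)] assms(2) unfolding decode_row_def by blast

lemma test_case_decode_row:
  assumes "atoms \<phi> \<subseteq> Sigma P d"
    and "\<forall>p\<in>P. \<exists>!v. v \<in> d p \<and> \<sigma> (X i p v)"
    and "eval \<sigma> (map_form (\<lambda>(p, v). X i p v) \<phi>)"
  shows "test_case P d \<phi> (decode_row d \<sigma> i)"
proof -
  have "eval (\<lambda>(p, v). decode_row d \<sigma> i p = v) \<phi> = eval (\<sigma> \<circ> (\<lambda>(p, v). X i p v)) \<phi>"
  proof (rule eval_cong)
    fix a assume "a \<in> atoms \<phi>"
    with assms(1) obtain p v where a: "a = (p, v)" and pv: "p \<in> P" "v \<in> d p"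
      by blast
    show "(\<lambda>(p, v). decode_row d \<sigma> i p = v) a = (\<sigma> \<circ> (\<lambda>(p, v). X i p v)) a"
      using decode_row_eq_iff[where d = d, OF assms(2)[rule_format, OF pv(1)] pv(2)] a by simp
  qed
  moreover have "\<forall>p\<in>P. decode_row d \<sigma> i p \<in> d p"
    using assms(2) decode_row_in_domain[where d = d] by simp
  ultimately show ?thesis
    using assms(3) unfolding test_case_def by (simp add: eval_map_form)
qed

lemma covers_decode_row:
  assumes "\<tau> \<subseteq> Sigma P d"
    and "\<forall>p\<in>P. \<exists>!v. v \<in> d p \<and> \<sigma> (X i p v)"
    and "\<forall>(p, v)\<in>\<tau>. \<sigma> (X i p v)"
  shows "covers (decode_row d \<sigma> i) \<tau>"
proof -
  have "decode_row d \<sigma> i p = v" if "(p, v) \<in> \<tau>" for p v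
  proof -
    have pv: "p \<in> P" "v \<in> d p"
      using that assms(1) by auto
    show ?thesis
      using decode_row_eq_iff[where d = d, OF assms(2)[rule_format, OF pv(1)] pv(2)] assms(3) that by blast
  qed
  then show ?thesis
    unfolding covers_def by auto
qed

text \<open>Rows up to \<open>lb + 1\<close> carry no \<open>U\<close>-variable, so they count as used unconditionally.\<close>

lemma is_CA_decode_rows:
  assumes "sut_model P d \<phi>" and "\<forall>h\<in>hard_CX P d \<phi> t N lb. h \<sigma>"
    and R_def: "R = {i \<in> {1..N}. i \<le> lb + 1 \<or> \<sigma> (U i)}"
  shows "is_CA P d \<phi> t (card R) (map (decode_row d \<sigma>) (sorted_list_of_set R))"
proof -
  have rows: "\<forall>i\<in>{1..N}. \<forall>p\<in>P. \<exists>!v. v \<in> d p \<and> \<sigma> (X i p v)"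
    and sutx: "\<forall>i\<in>{1..N}. eval \<sigma> (map_form (\<lambda>(p, v). X i p v) \<phi>)"
    and cx: "\<forall>i\<in>{1..N}. \<forall>\<tau>\<in>allowed_tuples P d \<phi> t. \<forall>(p, v)\<in>\<tau>. \<sigma> (C i \<tau>) \<longrightarrow> \<sigma> (X i p v)"
    and covered: "\<forall>\<tau>\<in>allowed_tuples P d \<phi> t. \<exists>i\<in>{1..N}. \<sigma> (C i \<tau>)"
    and cu: "\<forall>i\<in>{lb + 2..N}. \<forall>\<tau>\<in>allowed_tuples P d \<phi> t. \<sigma> (C i \<tau>) \<longrightarrow> \<sigma> (U i)"
    using assms(2) unfolding hard_CX_satisfied_iff by blast+
  have atoms: "atoms \<phi> \<subseteq> Sigma P d"
    using assms(1) unfolding sut_model_def by simp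
  have finite_R: "finite R" and R_rows: "R \<subseteq> {1..N}"
    unfolding R_def by auto
  have "test_case P d \<phi> (decode_row d \<sigma> i)" if "i \<in> R" for i
    using test_case_decode_row[OF atoms bspec[OF rows] bspec[OF sutx]] that R_rows by blast
  moreover have "\<exists>i\<in>R. covers (decode_row d \<sigma> i) \<tau>"
    if \<tau>: "\<tau> \<in> allowed_tuples P d \<phi> t" for \<tau>
  proof -
    obtain i where i: "i \<in> {1..N}" "\<sigma> (C i \<tau>)"
      using covered \<tau> by blast
    have "i \<in> R"
      using i cu \<tau> unfolding R_def by (cases "i \<le> lb + 1") auto
    moreover have "covers (decode_row d \<sigma> i) \<tau>"
    proof (rule covers_decode_row[OF _ bspec[OF rows i(1)]])
      show "\<tau> \<subseteq> Sigma P d"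
        using \<tau> unfolding allowed_tuples_def t_tuples_def by blast
      show "\<forall>(p, v)\<in>\<tau>. \<sigma> (X i p v)"
        using cx i \<tau> by fast
    qed
    ultimately show ?thesis ..
  qed
  ultimately show ?thesis
    unfolding is_CA_def using finite_R by auto
qed

lemma hard_CX_model_cost:
  assumes "sut_model P d \<phi>" and "\<forall>h\<in>hard_CX P d \<phi> t N lb. h \<sigma>"
  shows "CAN P d \<phi> t \<le> N" and "CAN P d \<phi> t - (lb + 1) \<le> soft_cost \<sigma> (soft_CX N lb)"
proof -
  define R where "R = {i \<in> {1..N}. i \<le> lb + 1 \<or> \<sigma> (U i)}"
  have CAN_R: "CAN P d \<phi> t \<le> card R"
    using is_CA_decode_rows[OF assms R_def] by (rule CAN_le)
  have "card R \<le> card {1..N}"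
    unfolding R_def by (intro card_mono) auto
  with CAN_R show "CAN P d \<phi> t \<le> N"
    by simp
  have "card R \<le> card ({1..lb + 1} \<union> {i \<in> {lb + 2..N}. \<sigma> (U i)})"
    unfolding R_def by (intro card_mono) auto
  also have "\<dots> \<le> lb + 1 + card {i \<in> {lb + 2..N}. \<sigma> (U i)}"
    using card_Un_le[of "{1..lb + 1}"] by simp
  finally show "CAN P d \<phi> t - (lb + 1) \<le> soft_cost \<sigma> (soft_CX N lb)"
    using CAN_R unfolding soft_cost_soft_CX by linarith
qed

text \<open>Rows beyond \<open>length L\<close> repeat the last test case, since (X) and (SUTX) ask for a
  test case in every row.\<close>

definition encode_CA :: "('p \<Rightarrow> 'v) list \<Rightarrow> ('p, 'v) var \<Rightarrow> bool" where
  "encode_CA L x = (case x of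
       X i p v \<Rightarrow> (L ! (min i (length L) - 1)) p = v
     | C i \<tau> \<Rightarrow> i \<le> length L \<and> covers (L ! (i - 1)) \<tau>
     | U i \<Rightarrow> i \<le> length L)"

lemma hard_CX_encode_CA:
  assumes CA: "is_CA P d \<phi> t K L" and "0 < K" and "K \<le> N"
  shows "\<forall>h\<in>hard_CX P d \<phi> t N lb. h (encode_CA L)"
proof -
  have length_L: "length L = K"
    using CA unfolding is_CA_def by simp
  define row where "row i = L ! (min i K - 1)" for i
  have "row i \<in> set L" if "1 \<le> i" for i
    unfolding row_def using that assms(2) length_L by (intro nth_mem) simp
  then have test_case_row: "test_case P d \<phi> (row i)" if "1 \<le> i" for i
    using that CA unfolding is_CA_def by blast
  have encode_X: "encode_CA L (X i p v) \<longleftrightarrow> row i p = v" for i p v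
    by (simp add: encode_CA_def row_def length_L)
  have "\<exists>!v. v \<in> d p \<and> encode_CA L (X i p v)" if "i \<in> {1..N}" "p \<in> P" for i p
  proof -
    have "row i p \<in> d p"
      using test_case_row that unfolding test_case_def by simp
    then show ?thesis
      unfolding encode_X by auto
  qed
  moreover have "eval (encode_CA L) (map_form (\<lambda>(p, v). X i p v) \<phi>)" if "i \<in> {1..N}" for i
  proof -
    have "encode_CA L \<circ> (\<lambda>(p, v). X i p v) = (\<lambda>(p, v). row i p = v)"
      by (auto simp: encode_X)
    then show ?thesis
      using test_case_row that unfolding test_case_def by (simp add: eval_map_form)
  qed
  moreover have "\<exists>i\<in>{1..N}. encode_CA L (C i \<tau>)" if \<tau>: "\<tau> \<in> allowed_tuples P d \<phi> t" for \<tau>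
  proof -
    obtain A where "A \<in> set L" "covers A \<tau>"
      using \<tau> CA unfolding is_CA_def by blast
    then obtain j where "j < K" "covers (L ! j) \<tau>"
      using length_L by (metis in_set_conv_nth)
    then show ?thesis
      using assms(3) length_L by (intro bexI[of _ "j + 1"]) (auto simp: encode_CA_def)
  qed
  ultimately show ?thesis
    unfolding hard_CX_satisfied_iff by (auto simp: encode_CA_def covers_def)
qed

lemma soft_cost_encode_CA:
  assumes "length L \<le> N"
  shows "soft_cost (encode_CA L) (soft_CX N lb) = length L - (lb + 1)"
proof -
  have "{i \<in> {lb + 2..N}. encode_CA L (U i)} = {lb + 2..length L}"
    using assms by (auto simp: encode_CA_def)
  then show ?thesis
    unfolding soft_cost_soft_CX by simp
qed

theorem proposition3:
  fixes P :: "'p set" and d :: "'p \<Rightarrow> 'v set" and \<phi> :: "('p \<times> 'v) form"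
    and t N lb :: nat
  assumes "sut_model P d \<phi>"
    and "1 \<le> t" and "t \<le> card P"
    and "1 \<le> N"
    and "lb < CAN P d \<phi> t"
  shows "opt_cost (hard_CX P d \<phi> t N lb) (soft_CX N lb) =
           (if CAN P d \<phi> t \<le> N then enat (CAN P d \<phi> t - (lb + 1)) else \<infinity>)"
proof (cases "CAN P d \<phi> t \<le> N")
  case True
  obtain L where L: "is_CA P d \<phi> t (CAN P d \<phi> t) L"
    using is_CA_CAN[OF assms(1)] by blast
  then have length_L: "length L = CAN P d \<phi> t"
    by (simp add: is_CA_def)
  have "opt_cost (hard_CX P d \<phi> t N lb) (soft_CX N lb) = enat (CAN P d \<phi> t - (lb + 1))"
  proof (rule opt_cost_eq_enatI)
    show "\<forall>h\<in>hard_CX P d \<phi> t N lb. h (encode_CA L)"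
      using hard_CX_encode_CA[OF L _ True] assms(5) by simp
    show "soft_cost (encode_CA L) (soft_CX N lb) = CAN P d \<phi> t - (lb + 1)"
      using soft_cost_encode_CA[of L N lb] True length_L by simp
    show "CAN P d \<phi> t - (lb + 1) \<le> soft_cost \<sigma> (soft_CX N lb)"
      if "\<forall>h\<in>hard_CX P d \<phi> t N lb. h \<sigma>" for \<sigma>
      using hard_CX_model_cost(2)[OF assms(1) that] .
  qed
  with True show ?thesis
    by simp
next
  case False
  then have "opt_cost (hard_CX P d \<phi> t N lb) (soft_CX N lb) = \<infinity>"
    using hard_CX_model_cost(1)[OF assms(1), of t N lb] by (intro opt_cost_unsatisfiable) blast
  with False show ?thesis
    by simp
qed

end
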